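(* Under the standing assumptions below, fix $\gamma\in\mathbb R^I_+$, $x_0\in\mathcal X$, $s_0\in\mathcal S$, and define $f:\tilde{\mathcal A}^\infty(x_0)\to\mathbb R$ by $f(a)=\mathbb E_{s_0}\sum_{t\ge0}\beta^t\big(r(x(s^t),a(s^t),s_t)+\sum_i\gamma^ig^i(x(s^t),a(s^t),s_t)\big)$ and $g:\tilde{\mathcal A}^\infty(x_0)\to\ell^\infty$ (indexed by $(t,h^t,i)$, $h^t=(s_0,\tilde a_0,\dots,s_{t-1},\tilde a_{t-1},s_t)\in\mathcal H^t$) by $$g_{t,h^t,i}(a)=\mathbf 1\{(a(s^0),\dots,a(s^{t-1}))=(\tilde a_0,\dots,\tilde a_{t-1})\}\Big(\mathbb E_{s_t}\sum_{n\ge0}\beta^ng^i(x(s^{t+n}),a(s^{t+n}),s_{t+n})-\bar g^i\Big).$$ Let $d=\inf_{\lambda\in(\ell^\infty)^*_+}\sup_{a\in\tilde{\mathcal A}^\infty(x_0)}\big(f(a)+\langle\lambda,g(a)\rangle\big)$, where $(\ell^\infty)^*_+$ is the set of positive continuous linear functionals on $\ell^\infty$. Then $d=D(\gamma,x_0,s_0)=\inf_{\lambda\in\Lambda}\sup_{a\in\tilde{\mathcal A}^\infty(x_0)}L(a,\lambda;\gamma,x_0,s_0)$.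
   Context: Setup. Let $\mathcal S$ be a finite set and $(s_t)_{t\ge0}$ a Markov chain on $\mathcal S$ with transition probabilities $\pi(s'|s)>0$ for all $s,s'\in\mathcal S$; for $s^t=(s_0,\dots,s_t)\in\mathcal S^{t+1}$ write $\pi^t(s^t|s_0)$ for its probability given $s_0$ and $\mathbb E_{s_t}$ for expectation over future shocks given $s^t$. Let $\mathcal A\subset\mathbb R^n$ be a finite set, $\mathcal X\subseteq\mathbb R^m$ a countable set, $\zeta:\mathcal X\times\mathcal A\times\mathcal S\to\mathcal X$, $p:\mathcal X\times\mathcal A\times\mathcal S\to\mathbb R$, $r,g^1,\dots,g^I$ bounded real functions on $\mathcal X\times\mathcal A\times\mathcal S$, $\bar g^i\in\mathbb R$, $\beta\in(0,1)$. A plan is $a=(a(s^t))_{t,s^t}$, $a(s^t)\in\mathcal A$, inducing $x(s^0)=x_0$, $x(s^{t+1})=\zeta(x(s^t),a(s^t),s_t)$. $\tilde{\mathcal A}(x,s)=\{a\in\mathcal A:p(x,a,s)\ge0\}$; $\tilde{\mathcal A}^\infty(x_0)$ is the set of plans with $a(s^t)\in\tilde{\mathcal A}(x(s^t),s_t)$ for all $t,s^t$. A plan is feasible for $(x_0,s_0)$ if it lies in $\tilde{\mathcal A}^\infty(x_0)$ and $\mathbb E_{s_t}\sum_{n\ge0}\beta^ng^i(x(s^{t+n}),a(s^{t+n}),s_{t+n})\ge\bar g^i$ for all $t,s^t,i$. Standing assumption: for every $(x_0,s_0)$ a feasible plan exists. Pre-action histories $h^t=(s_0,a_0,\dots,s_{t-1},a_{t-1},s_t)\in\mathcal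 H^t=\mathcal S^{t+1}\times\mathcal A^t$; a plan generates $h^t=(s_0,a(s^0),\dots,a(s^{t-1}),s_t)$ along $s^t$. Dual value: $\Lambda$ is the set of $(\lambda^i(h^t))_{t,h^t,i}$, $\lambda^i(h^t)\ge0$, $\sum_t\sum_{h^t}\sum_i\beta^t\lambda^i(h^t)\pi^t(s^t|s_0)<\infty$. $L(a,\lambda;\gamma,x_0,s_0)=\mathbb E_{s_0}\sum_t\beta^t\big[r(x(s^t),a(s^t),s_t)+\sum_i\gamma^ig^i(x(s^t),a(s^t),s_t)+\sum_i\lambda^i(h^t)(\sum_{n\ge0}\beta^ng^i(x(s^{t+n}),a(s^{t+n}),s_{t+n})-\bar g^i)\big]$ (with $h^t$ generated by the plan) and $D(\gamma,x_0,s_0)=\inf_{\lambda\in\Lambda}\sup_{a\in\tilde{\mathcal A}^\infty(x_0)}L$. *)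

theory Defs
  imports "HOL-Analysis.Analysis"
begin

(* Shock histories s^t = (s_0,...,s_t) are nonempty lists [s_0,...,s_t].
   P s s' is the transition probability pi(s'|s). *)

fun pprob :: "('s \<Rightarrow> 's \<Rightarrow> real) \<Rightarrow> 's \<Rightarrow> 's list \<Rightarrow> real" where
  "pprob P s [] = 1"
| "pprob P s (e # es) = P s e * pprob P e es"

definition condE :: "('s \<Rightarrow> 's \<Rightarrow> real) \<Rightarrow> 's list \<Rightarrow> nat \<Rightarrow> ('s list \<Rightarrow> real) \<Rightarrow> real" where
  "condE P ss n \<phi> = (\<Sum>es\<in>{es. length es = n}. pprob P (last ss) es * \<phi> (ss @ es))"

definition pit :: "('s \<Rightarrow> 's \<Rightarrow> real) \<Rightarrow> 's \<Rightarrow> 's list \<Rightarrow> real" where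
  "pit P s0 ss = (if ss \<noteq> [] \<and> hd ss = s0 then pprob P s0 (tl ss) else 0)"

primrec xseq :: "('x \<Rightarrow> 'a \<Rightarrow> 's \<Rightarrow> 'x) \<Rightarrow> ('s list \<Rightarrow> 'a) \<Rightarrow> 'x \<Rightarrow> 's list \<Rightarrow> nat \<Rightarrow> 'x" where
  "xseq \<zeta> a x0 ss 0 = x0"
| "xseq \<zeta> a x0 ss (Suc k) = \<zeta> (xseq \<zeta> a x0 ss k) (a (take (Suc k) ss)) (ss ! k)"

definition xst :: "('x \<Rightarrow> 'a \<Rightarrow> 's \<Rightarrow> 'x) \<Rightarrow> ('s list \<Rightarrow> 'a) \<Rightarrow> 'x \<Rightarrow> 's list \<Rightarrow> 'x" where
  "xst \<zeta> a x0 ss = xseq \<zeta> a x0 ss (length ss - 1)"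

definition cont :: "('x \<Rightarrow> 'a \<Rightarrow> 's \<Rightarrow> 'x) \<Rightarrow> ('s \<Rightarrow> 's \<Rightarrow> real) \<Rightarrow> real \<Rightarrow> ('x \<Rightarrow> 'a \<Rightarrow> 's \<Rightarrow> real)
     \<Rightarrow> ('s list \<Rightarrow> 'a) \<Rightarrow> 'x \<Rightarrow> 's list \<Rightarrow> real" where
  "cont \<zeta> P \<beta> h a x0 ss =
     (\<Sum>n. \<beta> ^ n * condE P ss n (\<lambda>ss'. h (xst \<zeta> a x0 ss') (a ss') (last ss')))"

definition Atil :: "'a set \<Rightarrow> ('x \<Rightarrow> 'a \<Rightarrow> 's \<Rightarrow> real) \<Rightarrow> 'x \<Rightarrow> 's \<Rightarrow> 'a set" where
  "Atil A p x s = {a\<in>A. p x a s \<ge> 0}"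

definition Ainf :: "'a set \<Rightarrow> ('x \<Rightarrow> 'a \<Rightarrow> 's \<Rightarrow> real) \<Rightarrow> ('x \<Rightarrow> 'a \<Rightarrow> 's \<Rightarrow> 'x) \<Rightarrow> 'x
     \<Rightarrow> ('s list \<Rightarrow> 'a) set" where
  "Ainf A p \<zeta> x0 = {a. \<forall>ss. ss \<noteq> [] \<longrightarrow> a ss \<in> Atil A p (xst \<zeta> a x0 ss) (last ss)}"

definition feasible :: "'a set \<Rightarrow> ('x \<Rightarrow> 'a \<Rightarrow> 's \<Rightarrow> real) \<Rightarrow> ('x \<Rightarrow> 'a \<Rightarrow> 's \<Rightarrow> 'x)
     \<Rightarrow> ('s \<Rightarrow> 's \<Rightarrow> real) \<Rightarrow> real \<Rightarrow> (nat \<Rightarrow> 'x \<Rightarrow> 'a \<Rightarrow> 's \<Rightarrow> real) \<Rightarrow> (nat \<Rightarrow> real) \<Rightarrow> nat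
     \<Rightarrow> 'x \<Rightarrow> 's \<Rightarrow> ('s list \<Rightarrow> 'a) \<Rightarrow> bool" where
  "feasible A p \<zeta> P \<beta> g gbar I x0 s0 a \<longleftrightarrow>
     a \<in> Ainf A p \<zeta> x0 \<and>
     (\<forall>ss i. ss \<noteq> [] \<and> hd ss = s0 \<and> i < I \<longrightarrow> cont \<zeta> P \<beta> (g i) a x0 ss \<ge> gbar i)"

(* pre-action histories h^t = (s_0,a_0,...,a_{t-1},s_t) as pairs ([s_0..s_t],[a_0..a_{t-1}]) *)
definition Hset :: "'a set \<Rightarrow> nat \<Rightarrow> ('s list \<times> 'a list) set" where
  "Hset A t = {(ss, as). length ss = Suc t \<and> length as = t \<and> set as \<subseteq> A}"

definition gen :: "('s list \<Rightarrow> 'a) \<Rightarrow> 's list \<Rightarrow> 's list \<times> 'a list" where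
  "gen a ss = (ss, map (\<lambda>k. a (take (Suc k) ss)) [0..<length ss - 1])"

definition Jset :: "'a set \<Rightarrow> nat \<Rightarrow> (('s list \<times> 'a list) \<times> nat) set" where
  "Jset A I = {(h, i). (\<exists>t. h \<in> Hset A t) \<and> i < I}"

definition linf :: "'j set \<Rightarrow> ('j \<Rightarrow> real) set" where
  "linf J = {y. (\<exists>B. \<forall>j\<in>J. \<bar>y j\<bar> \<le> B) \<and> (\<forall>j. j \<notin> J \<longrightarrow> y j = 0)}"

definition posdual :: "'j set \<Rightarrow> (('j \<Rightarrow> real) \<Rightarrow> real) set" where
  "posdual J = {\<phi>.
     (\<forall>y\<in>linf J. \<forall>z\<in>linf J. \<phi> (\<lambda>j. y j + z j) = \<phi> y + \<phi> z) \<and>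
     (\<forall>c. \<forall>y\<in>linf J. \<phi> (\<lambda>j. c * y j) = c * \<phi> y) \<and>
     (\<exists>K. \<forall>y\<in>linf J. \<forall>B. (\<forall>j\<in>J. \<bar>y j\<bar> \<le> B) \<longrightarrow> \<bar>\<phi> y\<bar> \<le> K * B) \<and>
     (\<forall>y\<in>linf J. (\<forall>j\<in>J. y j \<ge> 0) \<longrightarrow> \<phi> y \<ge> 0)}"

definition fobj :: "('x \<Rightarrow> 'a \<Rightarrow> 's \<Rightarrow> 'x) \<Rightarrow> ('s \<Rightarrow> 's \<Rightarrow> real) \<Rightarrow> real \<Rightarrow> ('x \<Rightarrow> 'a \<Rightarrow> 's \<Rightarrow> real)
     \<Rightarrow> (nat \<Rightarrow> 'x \<Rightarrow> 'a \<Rightarrow> 's \<Rightarrow> real) \<Rightarrow> nat \<Rightarrow> (nat \<Rightarrow> real) \<Rightarrow> 'x \<Rightarrow> 's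
     \<Rightarrow> ('s list \<Rightarrow> 'a) \<Rightarrow> real" where
  "fobj \<zeta> P \<beta> r g I \<gamma> x0 s0 a =
     (\<Sum>t. \<beta> ^ t * condE P [s0] t (\<lambda>ss.
         r (xst \<zeta> a x0 ss) (a ss) (last ss)
       + (\<Sum>i<I. \<gamma> i * g i (xst \<zeta> a x0 ss) (a ss) (last ss))))"

definition gvec :: "'a set \<Rightarrow> ('x \<Rightarrow> 'a \<Rightarrow> 's \<Rightarrow> 'x) \<Rightarrow> ('s \<Rightarrow> 's \<Rightarrow> real) \<Rightarrow> real
     \<Rightarrow> (nat \<Rightarrow> 'x \<Rightarrow> 'a \<Rightarrow> 's \<Rightarrow> real) \<Rightarrow> (nat \<Rightarrow> real) \<Rightarrow> nat \<Rightarrow> 'x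
     \<Rightarrow> ('s list \<Rightarrow> 'a) \<Rightarrow> ('s list \<times> 'a list) \<times> nat \<Rightarrow> real" where
  "gvec A \<zeta> P \<beta> g gbar I x0 a = (\<lambda>(h, i).
     if (h, i) \<in> Jset A I then
       (if gen a (fst h) = h then 1 else 0) * (cont \<zeta> P \<beta> (g i) a x0 (fst h) - gbar i)
     else 0)"

definition LamSet :: "'a set \<Rightarrow> nat \<Rightarrow> ('s \<Rightarrow> 's \<Rightarrow> real) \<Rightarrow> real \<Rightarrow> 's
     \<Rightarrow> ('s list \<times> 'a list \<Rightarrow> nat \<Rightarrow> real) set" where
  "LamSet A I P \<beta> s0 = {lam.
     (\<forall>t. \<forall>h\<in>Hset A t. \<forall>i<I. lam h i \<ge> 0) \<and>
     summable (\<lambda>t. \<Sum>h\<in>Hset A t. \<Sum>i<I. \<beta> ^ t * lam h i * pit P s0 (fst h))}"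

definition Lagr :: "('x \<Rightarrow> 'a \<Rightarrow> 's \<Rightarrow> 'x) \<Rightarrow> ('s \<Rightarrow> 's \<Rightarrow> real) \<Rightarrow> real \<Rightarrow> ('x \<Rightarrow> 'a \<Rightarrow> 's \<Rightarrow> real)
     \<Rightarrow> (nat \<Rightarrow> 'x \<Rightarrow> 'a \<Rightarrow> 's \<Rightarrow> real) \<Rightarrow> (nat \<Rightarrow> real) \<Rightarrow> nat \<Rightarrow> (nat \<Rightarrow> real) \<Rightarrow> 'x \<Rightarrow> 's
     \<Rightarrow> ('s list \<Rightarrow> 'a) \<Rightarrow> ('s list \<times> 'a list \<Rightarrow> nat \<Rightarrow> real) \<Rightarrow> real" where
  "Lagr \<zeta> P \<beta> r g gbar I \<gamma> x0 s0 a lam =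
     (\<Sum>t. \<beta> ^ t * condE P [s0] t (\<lambda>ss.
         r (xst \<zeta> a x0 ss) (a ss) (last ss)
       + (\<Sum>i<I. \<gamma> i * g i (xst \<zeta> a x0 ss) (a ss) (last ss))
       + (\<Sum>i<I. lam (gen a ss) i * (cont \<zeta> P \<beta> (g i) a x0 ss - gbar i))))"

definition Dval :: "'a set \<Rightarrow> ('x \<Rightarrow> 'a \<Rightarrow> 's \<Rightarrow> real) \<Rightarrow> ('x \<Rightarrow> 'a \<Rightarrow> 's \<Rightarrow> 'x) \<Rightarrow> ('s \<Rightarrow> 's \<Rightarrow> real)
     \<Rightarrow> real \<Rightarrow> ('x \<Rightarrow> 'a \<Rightarrow> 's \<Rightarrow> real) \<Rightarrow> (nat \<Rightarrow> 'x \<Rightarrow> 'a \<Rightarrow> 's \<Rightarrow> real) \<Rightarrow> (nat \<Rightarrow> real) \<Rightarrow> nat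
     \<Rightarrow> (nat \<Rightarrow> real) \<Rightarrow> 'x \<Rightarrow> 's \<Rightarrow> ereal" where
  "Dval A p \<zeta> P \<beta> r g gbar I \<gamma> x0 s0 =
     (INF lam\<in>LamSet A I P \<beta> s0. SUP a\<in>Ainf A p \<zeta> x0. ereal (Lagr \<zeta> P \<beta> r g gbar I \<gamma> x0 s0 a lam))"

end

(*
  Every family of multipliers lambda in Lambda induces the positive functional
    phi_lambda(y) = sum_t beta^t sum_(h^t,i) lambda^i(h^t) pi^t(h^t) y(h^t,i)
  on l^infty, and L(a, lambda) = f(a) + phi_lambda(g(a)); hence d <= D.

  Conversely, a positive functional phi induces the multipliers
  lambda_phi^i(h^t) = phi(e_(h^t,i)) / (beta^t pi^t(h^t)). Positivity of phi bounds the partial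
  sums of their weights by phi(1), so lambda_phi lies in Lambda. The functional phi may have a
  singular part that lambda_phi does not see, but it cannot hurt: switch a plan a at date T to
  feasible continuation plans; then g of the switched plan is nonnegative at every coordinate from
  date T on, so phi(g) dominates the part of phi_(lambda_phi)(g) before T. The switch changes f,
  the constraint values before T and the tail of phi_(lambda_phi)(g) only by amounts that vanish as
  T -> oo, by discounting and summability of lambda_phi. Hence L(a, lambda_phi) is at most
  sup_b (f(b) + phi(g(b))), and D <= d.
*)
theory Submission
  imports Defs
begin

section \<open>Histories and discounted expectations\<close>

lemma pprob_nonneg:
  assumes "\<And>s s'. 0 \<le> P s s'"
  shows "0 \<le> pprob P s es"
  using assms by (induction es arbitrary: s) auto

lemma pprob_pos:
  assumes "\<And>s s'. 0 < P s s'"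
  shows "0 < pprob P s es"
  using assms by (induction es arbitrary: s) auto

lemma finite_lists_length_UNIV: "finite {es::'s::finite list. length es = n}"
  using finite_lists_length_eq[of "UNIV::'s set" n] by simp

lemma sum_lists_length_Suc:
  fixes F :: "'s::finite list \<Rightarrow> 'b::comm_monoid_add"
  shows "(\<Sum>es | length es = Suc n. F es) = (\<Sum>e\<in>UNIV. \<Sum>es | length es = n. F (e # es))"
proof -
  have "{es::'s list. length es = Suc n} = (\<lambda>(e, es). e # es) ` (UNIV \<times> {es. length es = n})"
    by (auto simp: length_Suc_conv image_iff)
  moreover have "inj_on (\<lambda>(e, es). e # es) (UNIV \<times> {es::'s list. length es = n})"
    by (auto simp: inj_on_def)
  ultimately show ?thesis
    by (simp add: sum.reindex sum.cartesian_product case_prod_unfold)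
qed

lemma sum_pprob_eq_1:
  fixes P :: "'s::finite \<Rightarrow> 's \<Rightarrow> real"
  assumes "\<And>s. (\<Sum>s'\<in>UNIV. P s s') = 1"
  shows "(\<Sum>es | length es = n. pprob P s es) = 1"
proof (induction n arbitrary: s)
  case 0
  have "{es::'s list. length es = 0} = {[]}" by auto
  then show ?case by simp
next
  case (Suc n)
  then show ?case by (simp add: sum_lists_length_Suc sum_distrib_left[symmetric] assms)
qed

lemma condE_cong:
  "(\<And>es. length es = n \<Longrightarrow> \<phi> (ss @ es) = \<psi> (ss @ es)) \<Longrightarrow> condE P ss n \<phi> = condE P ss n \<psi>"
  unfolding condE_def by (rule sum.cong) auto

lemma condE_add: "condE P ss n (\<lambda>x. \<phi> x + \<psi> x) = condE P ss n \<phi> + condE P ss n \<psi>"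
  unfolding condE_def by (simp add: sum.distrib distrib_left)

lemma condE_diff: "condE P ss n (\<lambda>x. \<phi> x - \<psi> x) = condE P ss n \<phi> - condE P ss n \<psi>"
  unfolding condE_def by (simp add: sum_subtractf right_diff_distrib)

lemma condE_singleton_eq_pit:
  fixes P :: "'s::finite \<Rightarrow> 's \<Rightarrow> real"
  shows "condE P [s0] t \<psi> = (\<Sum>ss | length ss = Suc t. pit P s0 ss * \<psi> ss)"
proof -
  have "(\<Sum>ss | length ss = Suc t. pit P s0 ss * \<psi> ss)
      = (\<Sum>e\<in>UNIV. if e = s0 then (\<Sum>es | length es = t. pprob P s0 es * \<psi> (s0 # es)) else 0)"
    unfolding sum_lists_length_Suc pit_def by (intro sum.cong refl) simp
  also have "\<dots> = condE P [s0] t \<psi>"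
    unfolding condE_def by simp
  finally show ?thesis ..
qed

lemma xseq_cong:
  "(\<And>j. j < k \<Longrightarrow> a (take (Suc j) ss) = a' (take (Suc j) ss') \<and> ss ! j = ss' ! j)
   \<Longrightarrow> xseq \<zeta> a x0 ss k = xseq \<zeta> a' x0 ss' k"
  by (induction k) auto

lemma xseq_shift:
  "c \<le> length ss \<Longrightarrow>
   xseq \<zeta> a x0 ss (c + k) = xseq \<zeta> (\<lambda>l. a (take c ss @ l)) (xseq \<zeta> a x0 ss c) (drop c ss) k"
proof (induction k)
  case (Suc k)
  have "take (Suc (c + k)) ss = take c ss @ take (Suc k) (drop c ss)"
    using take_add[of c "Suc k" ss] by simp
  with Suc show ?case by simp
qed simp

lemma xst_take: "k < length ss \<Longrightarrow> xst \<zeta> a x0 (take (Suc k) ss) = xseq \<zeta> a x0 ss k"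
  unfolding xst_def by (auto intro: xseq_cong)

lemma Ainf_action_in: "a \<in> Ainf A p \<zeta> x0 \<Longrightarrow> ss \<noteq> [] \<Longrightarrow> a ss \<in> A"
  unfolding Ainf_def Atil_def by auto

lemma geometric_tail_bound:
  fixes u :: "nat \<Rightarrow> real"
  assumes \<beta>: "0 < \<beta>" "\<beta> < 1" and u: "\<And>n. \<bar>u n\<bar> \<le> (if n < N then 0 else B * \<beta> ^ n)"
  shows "summable u" "\<bar>suminf u\<bar> \<le> B * \<beta> ^ N / (1 - \<beta>)"
proof -
  have "0 \<le> B * \<beta> ^ N" using u[of N] abs_ge_zero[of "u N"] by simp
  moreover have "0 < \<beta> ^ N" using \<beta> by simp
  ultimately have B: "0 \<le> B" by (simp add: zero_le_mult_iff)
  have "summable (\<lambda>n. B * \<beta> ^ n)" using \<beta> by (intro summable_mult summable_geometric) auto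
  then have sv: "summable (\<lambda>n. if n < N then 0 else B * \<beta> ^ n)"
    by (rule summable_comparison_test[rotated]) (use B \<beta> in auto)
  have sa: "summable (\<lambda>n. \<bar>u n\<bar>)" by (rule summable_comparison_test[OF _ sv]) (use u in auto)
  then show "summable u" by (rule summable_rabs_cancel)
  have "\<bar>suminf u\<bar> \<le> (\<Sum>n. \<bar>u n\<bar>)" using summable_norm[of u] sa by simp
  also have "\<dots> \<le> (\<Sum>n. if n < N then 0 else B * \<beta> ^ n)" by (rule suminf_le[OF _ sa sv]) (use u in auto)
  also have "\<dots> = (\<Sum>n. B * \<beta> ^ N * \<beta> ^ n)"
    using suminf_split_initial_segment[OF sv, of N] by (simp add: power_add mult_ac)
  also have "\<dots> = B * \<beta> ^ N / (1 - \<beta>)"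
    using \<beta> by (simp add: suminf_mult suminf_geometric summable_geometric divide_inverse)
  finally show "\<bar>suminf u\<bar> \<le> B * \<beta> ^ N / (1 - \<beta>)" .
qed

lemma convolution_geometric_tendsto_0:
  fixes M :: "nat \<Rightarrow> real"
  assumes M: "\<And>t. 0 \<le> M t" "summable M" and \<beta>: "0 < \<beta>" "\<beta> < 1"
  shows "(\<lambda>T. \<Sum>t<T. M t * \<beta> ^ (T - t)) \<longlonglongrightarrow> 0"
proof -
  define c where "c k = (\<Sum>i\<le>k. M i * \<beta> ^ (k - i))" for k
  have "c sums ((\<Sum>k. M k) * (\<Sum>k. \<beta> ^ k))"
    unfolding c_def by (rule Cauchy_product_sums) (use M \<beta> in \<open>simp_all add: summable_geometric\<close>)
  then have "(\<lambda>k. \<beta> * c k) \<longlonglongrightarrow> 0"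
    by (intro tendsto_mult_right_zero summable_LIMSEQ_zero sums_summable)
  moreover have "(\<Sum>t<Suc k. M t * \<beta> ^ (Suc k - t)) = \<beta> * c k" for k
    unfolding c_def lessThan_Suc_atMost sum_distrib_left
    by (intro sum.cong refl) (simp add: Suc_diff_le mult_ac)
  ultimately show ?thesis by (simp add: LIMSEQ_imp_Suc)
qed

definition discounted_value :: "('s \<Rightarrow> 's \<Rightarrow> real) \<Rightarrow> real \<Rightarrow> 's list \<Rightarrow> ('s list \<Rightarrow> real) \<Rightarrow> real" where
  "discounted_value P \<beta> ss \<phi> = (\<Sum>n. \<beta> ^ n * condE P ss n \<phi>)"

lemma discounted_value_add:
  assumes "summable (\<lambda>n. \<beta> ^ n * condE P ss n \<phi>)" "summable (\<lambda>n. \<beta> ^ n * condE P ss n \<psi>)"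
  shows "discounted_value P \<beta> ss (\<lambda>x. \<phi> x + \<psi> x) = discounted_value P \<beta> ss \<phi> + discounted_value P \<beta> ss \<psi>"
  unfolding discounted_value_def condE_add distrib_left by (rule suminf_add[symmetric, OF assms])

lemma discounted_value_diff:
  assumes "summable (\<lambda>n. \<beta> ^ n * condE P ss n \<phi>)" "summable (\<lambda>n. \<beta> ^ n * condE P ss n \<psi>)"
  shows "discounted_value P \<beta> ss (\<lambda>x. \<phi> x - \<psi> x) = discounted_value P \<beta> ss \<phi> - discounted_value P \<beta> ss \<psi>"
  unfolding discounted_value_def condE_diff right_diff_distrib by (rule suminf_diff[symmetric, OF assms])

locale discounted_chain =
  fixes P :: "'s::finite \<Rightarrow> 's \<Rightarrow> real" and \<beta> :: real
  assumes P_pos: "\<And>s s'. 0 < P s s'"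
    and P_sum: "\<And>s. (\<Sum>s'\<in>UNIV. P s s') = 1"
    and \<beta>_pos: "0 < \<beta>" and \<beta>_less_1: "\<beta> < 1"
begin

lemma pit_nonneg: "0 \<le> pit P s0 ss"
  unfolding pit_def using pprob_nonneg[of P, OF less_imp_le[OF P_pos]] by simp

lemma pit_pos: "ss \<noteq> [] \<Longrightarrow> hd ss = s0 \<Longrightarrow> 0 < pit P s0 ss"
  unfolding pit_def using pprob_pos[of P, OF P_pos] by simp

lemma condE_abs_le:
  assumes "\<And>es. length es = n \<Longrightarrow> \<bar>\<phi> (ss @ es)\<bar> \<le> B"
  shows "\<bar>condE P ss n \<phi>\<bar> \<le> B"
proof -
  have "\<bar>condE P ss n \<phi>\<bar> \<le> (\<Sum>es | length es = n. \<bar>pprob P (last ss) es * \<phi> (ss @ es)\<bar>)"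
    unfolding condE_def by (rule sum_abs)
  also have "\<dots> \<le> (\<Sum>es | length es = n. pprob P (last ss) es * B)"
    using assms pprob_nonneg[of P, OF less_imp_le[OF P_pos]]
    by (intro sum_mono) (auto simp: abs_mult intro: mult_left_mono)
  also have "\<dots> = B"
    using sum_pprob_eq_1[OF P_sum] by (simp add: sum_distrib_right[symmetric])
  finally show ?thesis .
qed

lemma discounted_value_tail_bound:
  assumes zero: "\<And>es. length es < N \<Longrightarrow> \<phi> (ss @ es) = 0"
    and bound: "\<And>es. N \<le> length es \<Longrightarrow> \<bar>\<phi> (ss @ es)\<bar> \<le> B"
  shows "summable (\<lambda>n. \<beta> ^ n * condE P ss n \<phi>)"
    and "\<bar>discounted_value P \<beta> ss \<phi>\<bar> \<le> B * \<beta> ^ N / (1 - \<beta>)"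
proof -
  have "\<bar>\<beta> ^ n * condE P ss n \<phi>\<bar> \<le> (if n < N then 0 else B * \<beta> ^ n)" for n
  proof (cases "n < N")
    case True
    then have "condE P ss n \<phi> = condE P ss n (\<lambda>_. 0)" by (intro condE_cong) (simp add: zero)
    then show ?thesis using True by (simp add: condE_def)
  next
    case False
    then have "\<bar>condE P ss n \<phi>\<bar> \<le> B" by (intro condE_abs_le bound) simp
    then show ?thesis using False \<beta>_pos by (simp add: abs_mult mult.commute mult_left_mono)
  qed
  from geometric_tail_bound[OF \<beta>_pos \<beta>_less_1 this]
  show "summable (\<lambda>n. \<beta> ^ n * condE P ss n \<phi>)"
    and "\<bar>discounted_value P \<beta> ss \<phi>\<bar> \<le> B * \<beta> ^ N / (1 - \<beta>)"
    unfolding discounted_value_def by simp_all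
qed

lemma discounted_value_bound:
  assumes "\<And>es. \<bar>\<phi> (ss @ es)\<bar> \<le> B"
  shows "summable (\<lambda>n. \<beta> ^ n * condE P ss n \<phi>)"
    and "\<bar>discounted_value P \<beta> ss \<phi>\<bar> \<le> B / (1 - \<beta>)"
  using discounted_value_tail_bound[where N=0 and B=B] assms by simp_all

end

section \<open>Bounded sequences and positive functionals\<close>

lemma linf_add: "y \<in> linf J \<Longrightarrow> z \<in> linf J \<Longrightarrow> (\<lambda>j. y j + z j) \<in> linf J"
proof -
  assume y: "y \<in> linf J" and z: "z \<in> linf J"
  then obtain B1 B2 where "\<forall>j\<in>J. \<bar>y j\<bar> \<le> B1" "\<forall>j\<in>J. \<bar>z j\<bar> \<le> B2" unfolding linf_def by blast
  then have "\<forall>j\<in>J. \<bar>y j + z j\<bar> \<le> B1 + B2" by (meson abs_triangle_ineq add_mono order_trans)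
  then show ?thesis using y z unfolding linf_def by auto
qed

lemma linf_scale: "y \<in> linf J \<Longrightarrow> (\<lambda>j. c * y j) \<in> linf J"
proof -
  assume y: "y \<in> linf J"
  then obtain B where "\<forall>j\<in>J. \<bar>y j\<bar> \<le> B" unfolding linf_def by blast
  then have "\<forall>j\<in>J. \<bar>c * y j\<bar> \<le> \<bar>c\<bar> * B" by (simp add: abs_mult mult_left_mono)
  then show ?thesis using y unfolding linf_def by auto
qed

lemma linf_diff: "y \<in> linf J \<Longrightarrow> z \<in> linf J \<Longrightarrow> (\<lambda>j. y j - z j) \<in> linf J"
  using linf_add[of y J "\<lambda>j. (-1) * z j"] linf_scale[of z J "-1"] by simp

lemma linf_sum: "finite F \<Longrightarrow> (\<And>k. k \<in> F \<Longrightarrow> y k \<in> linf J) \<Longrightarrow> (\<lambda>j. \<Sum>k\<in>F. y k j) \<in> linf J"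
proof (induction F rule: finite_induct)
  case empty
  then show ?case unfolding linf_def by auto
next
  case (insert k F)
  then show ?case using linf_add[of "y k" J] by simp
qed

lemma linf_restrict: "y \<in> linf J \<Longrightarrow> (\<lambda>j. if j \<in> S then y j else 0) \<in> linf J"
proof -
  assume y: "y \<in> linf J"
  then obtain B where "\<forall>j\<in>J. \<bar>y j\<bar> \<le> B" unfolding linf_def by blast
  then have "\<forall>j\<in>J. \<bar>if j \<in> S then y j else 0\<bar> \<le> max B 0" by auto
  moreover have "\<forall>j. j \<notin> J \<longrightarrow> (if j \<in> S then y j else 0) = 0" using y unfolding linf_def by auto
  ultimately show ?thesis unfolding linf_def by blast
qed

lemma linf_indicator: "S \<subseteq> J \<Longrightarrow> indicator S \<in> linf J"
  unfolding linf_def indicator_def by (intro CollectI conjI exI[of _ 1]) auto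

lemma posdual_add: "\<phi> \<in> posdual J \<Longrightarrow> y \<in> linf J \<Longrightarrow> z \<in> linf J \<Longrightarrow> \<phi> (\<lambda>j. y j + z j) = \<phi> y + \<phi> z"
  unfolding posdual_def by auto

lemma posdual_scale: "\<phi> \<in> posdual J \<Longrightarrow> y \<in> linf J \<Longrightarrow> \<phi> (\<lambda>j. c * y j) = c * \<phi> y"
  unfolding posdual_def by auto

lemma posdual_nonneg: "\<phi> \<in> posdual J \<Longrightarrow> y \<in> linf J \<Longrightarrow> (\<And>j. j \<in> J \<Longrightarrow> 0 \<le> y j) \<Longrightarrow> 0 \<le> \<phi> y"
  unfolding posdual_def by auto

lemma posdual_mono:
  assumes \<phi>: "\<phi> \<in> posdual J" and y: "y \<in> linf J" and z: "z \<in> linf J" and le: "\<And>j. j \<in> J \<Longrightarrow> y j \<le> z j"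
  shows "\<phi> y \<le> \<phi> z"
proof -
  have "\<phi> z = \<phi> (\<lambda>j. y j + (z j - y j))" by simp
  also have "\<dots> = \<phi> y + \<phi> (\<lambda>j. z j - y j)" by (rule posdual_add[OF \<phi> y linf_diff[OF z y]])
  finally show ?thesis using posdual_nonneg[OF \<phi> linf_diff[OF z y]] le by simp
qed

lemma posdual_sum:
  assumes \<phi>: "\<phi> \<in> posdual J"
  shows "finite F \<Longrightarrow> (\<And>k. k \<in> F \<Longrightarrow> y k \<in> linf J) \<Longrightarrow> \<phi> (\<lambda>j. \<Sum>k\<in>F. y k j) = (\<Sum>k\<in>F. \<phi> (y k))"
proof (induction F rule: finite_induct)
  case empty
  have "(\<lambda>_. 0) \<in> linf J" unfolding linf_def by auto
  from posdual_scale[OF \<phi> this, of 0] show ?case by simp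
next
  case (insert k F)
  have "\<phi> (\<lambda>j. y k j + (\<Sum>k\<in>F. y k j)) = \<phi> (y k) + \<phi> (\<lambda>j. \<Sum>k\<in>F. y k j)"
    using insert by (intro posdual_add[OF \<phi>] linf_sum) auto
  then show ?case using insert by simp
qed

lemma posdual_finite_restrict:
  assumes \<phi>: "\<phi> \<in> posdual J" and F: "finite F" "F \<subseteq> J"
  shows "\<phi> (\<lambda>j. if j \<in> F then y j else 0) = (\<Sum>j\<in>F. y j * \<phi> (indicator {j}))"
proof -
  have restrict: "(\<lambda>j. if j \<in> F then y j else 0) = (\<lambda>j'. \<Sum>j\<in>F. y j * indicator {j} j')"
    using F(1) by (auto simp: indicator_def if_distrib[of "(*) _"] cong: if_cong)
  have "\<phi> (\<lambda>j'. \<Sum>j\<in>F. y j * indicator {j} j') = (\<Sum>j\<in>F. \<phi> (\<lambda>j'. y j * indicator {j} j'))"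
    using F by (intro posdual_sum[OF \<phi>] linf_scale linf_indicator) auto
  also have "\<dots> = (\<Sum>j\<in>F. y j * \<phi> (indicator {j}))"
    using F by (intro sum.cong refl posdual_scale[OF \<phi>] linf_indicator) auto
  finally show ?thesis unfolding restrict .
qed

section \<open>Plans and their histories\<close>

lemma fst_gen [simp]: "fst (gen a ss) = ss"
  unfolding gen_def by simp

lemma gen_in_Hset:
  assumes a: "a \<in> Ainf A p \<zeta> x0" and len: "length ss = Suc t"
  shows "gen a ss \<in> Hset A t"
proof -
  have "a (take (Suc k) ss) \<in> A" for k
    using len by (intro Ainf_action_in[OF a]) auto
  then show ?thesis unfolding gen_def Hset_def using len by auto
qed

lemma finite_Hset: "finite A \<Longrightarrow> finite (Hset A t :: ('s::finite list \<times> 'a list) set)"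
proof -
  assume "finite A"
  then have "finite ({ss::'s list. length ss = Suc t} \<times> {as. set as \<subseteq> A \<and> length as = t})"
    using finite_lists_length_UNIV finite_lists_length_eq by blast
  moreover have "Hset A t \<subseteq> {ss. length ss = Suc t} \<times> {as. set as \<subseteq> A \<and> length as = t}"
    unfolding Hset_def by auto
  ultimately show ?thesis by (rule finite_subset[rotated])
qed

lemma Hset_in_Jset: "h \<in> Hset A t \<Longrightarrow> i < I \<Longrightarrow> (h, i) \<in> Jset A I"
  unfolding Jset_def by auto

lemma sum_Hset_gen:
  fixes a :: "'s::finite list \<Rightarrow> 'a"
  assumes A: "finite A" and a: "a \<in> Ainf A p \<zeta> x0"
  shows "(\<Sum>h\<in>Hset A t. if gen a (fst h) = h then F h else 0) = (\<Sum>ss | length ss = Suc t. F (gen a ss))"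
proof -
  have image: "{h \<in> Hset A t. gen a (fst h) = h} = gen a ` {ss. length ss = Suc t}"
  proof
    show "{h \<in> Hset A t. gen a (fst h) = h} \<subseteq> gen a ` {ss. length ss = Suc t}"
    proof
      fix h assume h: "h \<in> {h \<in> Hset A t. gen a (fst h) = h}"
      then have "length (fst h) = Suc t" unfolding Hset_def by auto
      with h show "h \<in> gen a ` {ss. length ss = Suc t}" by (metis (mono_tags, lifting) image_eqI mem_Collect_eq)
    qed
    show "gen a ` {ss. length ss = Suc t} \<subseteq> {h \<in> Hset A t. gen a (fst h) = h}"
      using gen_in_Hset[OF a] by auto
  qed
  have "(\<Sum>h\<in>Hset A t. if gen a (fst h) = h then F h else 0) = (\<Sum>h\<in>gen a ` {ss. length ss = Suc t}. F h)"
    unfolding image[symmetric] by (rule sum.inter_filter[symmetric, OF finite_Hset[OF A]])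
  also have "\<dots> = (\<Sum>ss | length ss = Suc t. F (gen a ss))"
    by (rule sum.reindex_cong[where l = "gen a"]) (auto simp: inj_on_def dest: arg_cong[where f = fst])
  finally show ?thesis .
qed

locale discounted_problem = discounted_chain P \<beta>
  for P :: "'s::finite \<Rightarrow> 's \<Rightarrow> real" and \<beta> :: real +
  fixes A :: "'a set" and X :: "'x set"
    and \<zeta> :: "'x \<Rightarrow> 'a \<Rightarrow> 's \<Rightarrow> 'x" and p r :: "'x \<Rightarrow> 'a \<Rightarrow> 's \<Rightarrow> real"
    and g :: "nat \<Rightarrow> 'x \<Rightarrow> 'a \<Rightarrow> 's \<Rightarrow> real" and gbar \<gamma> :: "nat \<Rightarrow> real" and I :: nat
    and x0 :: 'x and s0 :: 's
    and r_max g_max :: real and continuation :: "'x \<Rightarrow> 's \<Rightarrow> 's list \<Rightarrow> 'a"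
  assumes A_fin: "finite A"
    and \<zeta>_X: "\<And>x a s. x \<in> X \<Longrightarrow> a \<in> A \<Longrightarrow> \<zeta> x a s \<in> X"
    and r_bound: "\<And>x a s. x \<in> X \<Longrightarrow> a \<in> A \<Longrightarrow> \<bar>r x a s\<bar> \<le> r_max"
    and g_bound: "\<And>i x a s. i < I \<Longrightarrow> x \<in> X \<Longrightarrow> a \<in> A \<Longrightarrow> \<bar>g i x a s\<bar> \<le> g_max"
    and g_max_nonneg: "0 \<le> g_max"
    and continuation_feasible: "\<And>x s. x \<in> X \<Longrightarrow> feasible A p \<zeta> P \<beta> g gbar I x s (continuation x s)"
    and x0: "x0 \<in> X"
begin

abbreviation coords :: "(('s list \<times> 'a list) \<times> nat) set" where
  "coords \<equiv> Jset A I"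

abbreviation hists :: "nat \<Rightarrow> ('s list \<times> 'a list) set" where
  "hists t \<equiv> Hset A t"

lemma xst_in_X:
  assumes "x \<in> X" "a \<in> Ainf A p \<zeta> x" "ss \<noteq> []"
  shows "xst \<zeta> a x ss \<in> X"
proof -
  have "xseq \<zeta> a x ss k \<in> X" for k
    by (induction k) (use assms \<zeta>_X Ainf_action_in[of a A p \<zeta> x "take (Suc _) ss"] in auto)
  then show ?thesis unfolding xst_def .
qed

definition f_flow :: "('s list \<Rightarrow> 'a) \<Rightarrow> 's list \<Rightarrow> real" where
  "f_flow a ss = r (xst \<zeta> a x0 ss) (a ss) (last ss) + (\<Sum>i<I. \<gamma> i * g i (xst \<zeta> a x0 ss) (a ss) (last ss))"

definition g_flow :: "nat \<Rightarrow> ('s list \<Rightarrow> 'a) \<Rightarrow> 's list \<Rightarrow> real" where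
  "g_flow i a ss = g i (xst \<zeta> a x0 ss) (a ss) (last ss)"

definition f_max :: real where
  "f_max = r_max + (\<Sum>i<I. \<bar>\<gamma> i\<bar>) * g_max"

definition gvec_max :: real where
  "gvec_max = g_max / (1 - \<beta>) + (\<Sum>i<I. \<bar>gbar i\<bar>)"

lemma fobj_eq_discounted_value: "fobj \<zeta> P \<beta> r g I \<gamma> x0 s0 a = discounted_value P \<beta> [s0] (f_flow a)"
  unfolding fobj_def f_flow_def discounted_value_def ..

lemma cont_eq_discounted_value: "cont \<zeta> P \<beta> (g i) a x0 ss = discounted_value P \<beta> ss (g_flow i a)"
  unfolding cont_def g_flow_def discounted_value_def ..

lemma abs_f_flow_le:
  assumes a: "a \<in> Ainf A p \<zeta> x0" and ss: "ss \<noteq> []"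
  shows "\<bar>f_flow a ss\<bar> \<le> f_max"
proof -
  let ?x = "xst \<zeta> a x0 ss"
  have x: "?x \<in> X" by (rule xst_in_X[OF x0 a ss])
  have act: "a ss \<in> A" by (rule Ainf_action_in[OF a ss])
  have "\<bar>\<Sum>i<I. \<gamma> i * g i ?x (a ss) (last ss)\<bar> \<le> (\<Sum>i<I. \<bar>\<gamma> i\<bar> * g_max)"
    by (rule order_trans[OF sum_abs sum_mono]) (auto simp: abs_mult intro!: mult_left_mono g_bound x act)
  then show ?thesis
    using r_bound[OF x act, of "last ss"] unfolding f_flow_def f_max_def sum_distrib_right by linarith
qed

lemma abs_g_flow_le:
  assumes a: "a \<in> Ainf A p \<zeta> x0" and ss: "ss \<noteq> []" and i: "i < I"
  shows "\<bar>g_flow i a ss\<bar> \<le> g_max"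
  unfolding g_flow_def by (rule g_bound[OF i xst_in_X[OF x0 a ss] Ainf_action_in[OF a ss]])

lemma summable_f_flow:
  assumes "a \<in> Ainf A p \<zeta> x0"
  shows "summable (\<lambda>n. \<beta> ^ n * condE P [s0] n (f_flow a))"
  by (rule discounted_value_bound(1)[where B = f_max]) (simp add: abs_f_flow_le[OF assms])

lemma summable_g_flow:
  assumes "a \<in> Ainf A p \<zeta> x0" "ss \<noteq> []" "i < I"
  shows "summable (\<lambda>n. \<beta> ^ n * condE P ss n (g_flow i a))"
  by (rule discounted_value_bound(1)[where B = g_max]) (simp add: abs_g_flow_le assms)

lemma abs_cont_le:
  assumes "a \<in> Ainf A p \<zeta> x0" "ss \<noteq> []" "i < I"
  shows "\<bar>cont \<zeta> P \<beta> (g i) a x0 ss\<bar> \<le> g_max / (1 - \<beta>)"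
  unfolding cont_eq_discounted_value
  by (rule discounted_value_bound(2)) (simp add: abs_g_flow_le assms)

lemma gvec_on_Jset:
  "(h, i) \<in> coords \<Longrightarrow> gvec A \<zeta> P \<beta> g gbar I x0 a (h, i)
     = (if gen a (fst h) = h then 1 else 0) * (cont \<zeta> P \<beta> (g i) a x0 (fst h) - gbar i)"
  unfolding gvec_def by simp

lemma abs_gvec_le:
  assumes a: "a \<in> Ainf A p \<zeta> x0" and j: "j \<in> coords"
  shows "\<bar>gvec A \<zeta> P \<beta> g gbar I x0 a j\<bar> \<le> gvec_max"
proof -
  obtain h i where hi: "j = (h, i)" by (cases j)
  have i: "i < I" and ne: "fst h \<noteq> []" using j hi unfolding Jset_def Hset_def by auto
  have "\<bar>gbar i\<bar> \<le> (\<Sum>i<I. \<bar>gbar i\<bar>)" using i by (intro member_le_sum) auto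
  moreover have "0 \<le> gvec_max" unfolding gvec_max_def using g_max_nonneg \<beta>_less_1 by (simp add: sum_nonneg)
  ultimately show ?thesis
    using abs_cont_le[OF a ne i] j unfolding hi gvec_on_Jset[OF j[unfolded hi]] gvec_max_def by auto
qed

lemma gvec_in_linf:
  assumes "a \<in> Ainf A p \<zeta> x0"
  shows "gvec A \<zeta> P \<beta> g gbar I x0 a \<in> linf coords"
proof -
  have "\<forall>j\<in>coords. \<bar>gvec A \<zeta> P \<beta> g gbar I x0 a j\<bar> \<le> gvec_max"
    using abs_gvec_le[OF assms] by blast
  moreover have "\<forall>j. j \<notin> coords \<longrightarrow> gvec A \<zeta> P \<beta> g gbar I x0 a j = 0"
    unfolding gvec_def by auto
  ultimately show ?thesis unfolding linf_def by blast
qed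

section \<open>Switching plans to feasible continuations\<close>

text \<open>A history of length \<open>t + 1\<close> ends at date \<open>t\<close>, so \<open>switch T a\<close> follows \<open>a\<close> at the dates
  before \<open>T\<close> and from date \<open>T\<close> on the continuation plan started at the state reached by \<open>a\<close>.
  Histories not starting at \<open>s0\<close> have probability zero but still index coordinates of \<open>gvec\<close>;
  on them the switch happens at date 0.\<close>

definition switch_date :: "nat \<Rightarrow> 's list \<Rightarrow> nat" where
  "switch_date T ss = (if hd ss = s0 then T else 0)"

definition switch :: "nat \<Rightarrow> ('s list \<Rightarrow> 'a) \<Rightarrow> 's list \<Rightarrow> 'a" where
  "switch T a ss =
     (if length ss \<le> switch_date T ss then a ss
      else continuation (xst \<zeta> a x0 (take (Suc (switch_date T ss)) ss)) (ss ! switch_date T ss)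
             (drop (switch_date T ss) ss))"

lemma switch_date_take: "ss \<noteq> [] \<Longrightarrow> switch_date T (take (Suc k) ss) = switch_date T ss"
  unfolding switch_date_def by (cases ss) auto

lemma switch_date_append: "ss \<noteq> [] \<Longrightarrow> switch_date T (ss @ es) = switch_date T ss"
  unfolding switch_date_def by (cases ss) auto

lemma switch_before: "length ss \<le> switch_date T ss \<Longrightarrow> switch T a ss = a ss"
  unfolding switch_def by simp

lemma xst_switch_before:
  assumes "ss \<noteq> []" "length ss \<le> Suc (switch_date T ss)"
  shows "xst \<zeta> (switch T a) x0 ss = xst \<zeta> a x0 ss"
  unfolding xst_def
proof (rule xseq_cong)
  fix j assume "j < length ss - 1"
  then show "switch T a (take (Suc j) ss) = a (take (Suc j) ss) \<and> ss ! j = ss ! j"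
    using assms switch_date_take[OF assms(1), of T j] by (simp add: switch_before)
qed

lemma gen_switch_before:
  assumes "ss \<noteq> []" "length ss \<le> Suc (switch_date T ss)"
  shows "gen (switch T a) ss = gen a ss"
  unfolding gen_def using assms switch_date_take[OF assms(1), of T]
  by (auto intro!: map_cong switch_before)

lemma switch_after:
  fixes a :: "'s list \<Rightarrow> 'a"
  assumes ss: "ss \<noteq> []" and c: "switch_date T ss < length ss"
  defines "x' \<equiv> xst \<zeta> a x0 (take (Suc (switch_date T ss)) ss)"
  defines "b \<equiv> continuation x' (ss ! switch_date T ss)"
  shows "switch T a ss = b (drop (switch_date T ss) ss)"
    and "xst \<zeta> (switch T a) x0 ss = xst \<zeta> b x' (drop (switch_date T ss) ss)"
proof -
  define c where "c = switch_date T ss"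
  have cl: "c < length ss" using c c_def by simp
  show "switch T a ss = b (drop (switch_date T ss) ss)"
    using c unfolding switch_def b_def x'_def by simp
  have "xst \<zeta> (switch T a) x0 ss = xseq \<zeta> (switch T a) x0 ss (c + (length ss - 1 - c))"
    unfolding xst_def using cl by (simp add: le_add_diff_inverse)
  also have "\<dots> = xseq \<zeta> (\<lambda>l. switch T a (take c ss @ l)) (xseq \<zeta> (switch T a) x0 ss c) (drop c ss)
                    (length ss - 1 - c)"
    by (rule xseq_shift) (use cl in simp)
  also have "xseq \<zeta> (switch T a) x0 ss c = x'"
  proof -
    have "xseq \<zeta> (switch T a) x0 ss c = xseq \<zeta> a x0 ss c"
      by (rule xseq_cong) (use switch_date_take[OF ss, of T] c_def in \<open>auto intro: switch_before\<close>)
    then show ?thesis unfolding x'_def c_def[symmetric] xst_take[OF cl] .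
  qed
  also have "xseq \<zeta> (\<lambda>l. switch T a (take c ss @ l)) x' (drop c ss) (length ss - 1 - c)
     = xseq \<zeta> b x' (drop c ss) (length ss - 1 - c)"
  proof (rule xseq_cong)
    fix j assume j: "j < length ss - 1 - c"
    have "take c ss @ take (Suc j) (drop c ss) = take (c + Suc j) ss"
      using take_add[of c "Suc j" ss] by simp
    moreover have "switch_date T (take (c + Suc j) ss) = c"
      using switch_date_take[OF ss, of T "c + j"] c_def by simp
    moreover have "Suc (c + j) < length ss" using j by simp
    ultimately show "switch T a (take c ss @ take (Suc j) (drop c ss)) = b (take (Suc j) (drop c ss))
        \<and> drop c ss ! j = drop c ss ! j"
      unfolding switch_def by (simp add: b_def x'_def c_def[symmetric] min_def drop_take)
  qed
  also have "\<dots> = xst \<zeta> b x' (drop (switch_date T ss) ss)"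
    unfolding xst_def c_def by simp
  finally show "xst \<zeta> (switch T a) x0 ss = xst \<zeta> b x' (drop (switch_date T ss) ss)" .
qed

lemma switch_in_Ainf:
  assumes a: "a \<in> Ainf A p \<zeta> x0"
  shows "switch T a \<in> Ainf A p \<zeta> x0"
  unfolding Ainf_def
proof (intro CollectI allI impI)
  fix ss :: "'s list" assume ss: "ss \<noteq> []"
  show "switch T a ss \<in> Atil A p (xst \<zeta> (switch T a) x0 ss) (last ss)"
  proof (cases "length ss \<le> switch_date T ss")
    case True
    then show ?thesis
      using switch_before[OF True] xst_switch_before[OF ss] a ss unfolding Ainf_def by auto
  next
    case False
    define c where "c = switch_date T ss"
    define x' where "x' = xst \<zeta> a x0 (take (Suc c) ss)"
    define b where "b = continuation x' (ss ! c)"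
    have "x' \<in> X" unfolding x'_def using ss by (intro xst_in_X[OF x0 a]) simp
    then have "b \<in> Ainf A p \<zeta> x'"
      using continuation_feasible unfolding b_def feasible_def by blast
    moreover have "drop c ss \<noteq> []" using False c_def by simp
    ultimately have "b (drop c ss) \<in> Atil A p (xst \<zeta> b x' (drop c ss)) (last (drop c ss))"
      unfolding Ainf_def by blast
    then show ?thesis
      using switch_after[OF ss, of T a] False
      unfolding c_def[symmetric] x'_def[symmetric] b_def[symmetric] by (simp add: last_drop)
  qed
qed

lemma cont_switch_after:
  fixes a :: "'s list \<Rightarrow> 'a"
  assumes ss: "ss \<noteq> []" and c: "switch_date T ss < length ss"
  defines "x' \<equiv> xst \<zeta> a x0 (take (Suc (switch_date T ss)) ss)"
  defines "b \<equiv> continuation x' (ss ! switch_date T ss)"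
  shows "cont \<zeta> P \<beta> (g i) (switch T a) x0 ss = cont \<zeta> P \<beta> (g i) b x' (drop (switch_date T ss) ss)"
proof -
  let ?c = "switch_date T ss"
  have "condE P ss n (\<lambda>ss'. g i (xst \<zeta> (switch T a) x0 ss') (switch T a ss') (last ss'))
      = condE P (drop ?c ss) n (\<lambda>ss'. g i (xst \<zeta> b x' ss') (b ss') (last ss'))" for n
    unfolding condE_def
  proof (rule sum.cong[OF refl])
    fix es :: "'s list"
    have ss': "ss @ es \<noteq> []" and c': "switch_date T (ss @ es) < length (ss @ es)"
      using ss c switch_date_append[OF ss, of T es] by auto
    have shift: "drop ?c (ss @ es) = drop ?c ss @ es" "take (Suc ?c) (ss @ es) = take (Suc ?c) ss"
      "(ss @ es) ! ?c = ss ! ?c" "last (ss @ es) = last (drop ?c ss @ es)"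
      using c by (auto simp: nth_append last_append last_drop)
    have "last (drop ?c ss) = last ss" using c by (simp add: last_drop)
    then show "pprob P (last ss) es * g i (xst \<zeta> (switch T a) x0 (ss @ es)) (switch T a (ss @ es)) (last (ss @ es))
      = pprob P (last (drop ?c ss)) es * g i (xst \<zeta> b x' (drop ?c ss @ es)) (b (drop ?c ss @ es)) (last (drop ?c ss @ es))"
      using switch_after[OF ss' c', of a] unfolding switch_date_append[OF ss] shift
      unfolding x'_def[symmetric] b_def[symmetric] by simp
  qed
  then show ?thesis unfolding cont_def by simp
qed

lemma cont_switch_ge:
  assumes a: "a \<in> Ainf A p \<zeta> x0" and ss: "ss \<noteq> []" and c: "switch_date T ss < length ss" and i: "i < I"
  shows "gbar i \<le> cont \<zeta> P \<beta> (g i) (switch T a) x0 ss"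
proof -
  define x' where "x' = xst \<zeta> a x0 (take (Suc (switch_date T ss)) ss)"
  have "x' \<in> X" unfolding x'_def using ss by (intro xst_in_X[OF x0 a]) simp
  moreover have "drop (switch_date T ss) ss \<noteq> []" "hd (drop (switch_date T ss) ss) = ss ! switch_date T ss"
    using c by (auto simp: hd_drop_conv_nth)
  ultimately show ?thesis
    using continuation_feasible i unfolding cont_switch_after[OF ss c] x'_def[symmetric] feasible_def
    by metis
qed

lemma cont_switch_close:
  assumes a: "a \<in> Ainf A p \<zeta> x0" and ss: "ss \<noteq> []" and i: "i < I"
  shows "\<bar>cont \<zeta> P \<beta> (g i) (switch T a) x0 ss - cont \<zeta> P \<beta> (g i) a x0 ss\<bar>
     \<le> 2 * g_max * \<beta> ^ (Suc (switch_date T ss) - length ss) / (1 - \<beta>)"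
proof -
  have a': "switch T a \<in> Ainf A p \<zeta> x0" by (rule switch_in_Ainf[OF a])
  have "\<bar>discounted_value P \<beta> ss (\<lambda>x. g_flow i (switch T a) x - g_flow i a x)\<bar>
     \<le> 2 * g_max * \<beta> ^ (Suc (switch_date T ss) - length ss) / (1 - \<beta>)"
  proof (rule discounted_value_tail_bound(2))
    fix es :: "'s list" assume "length es < Suc (switch_date T ss) - length ss"
    then have "length (ss @ es) \<le> switch_date T (ss @ es)"
      using switch_date_append[OF ss] by simp
    then show "g_flow i (switch T a) (ss @ es) - g_flow i a (ss @ es) = 0"
      unfolding g_flow_def using ss xst_switch_before[of "ss @ es" T a] switch_before by simp
  next
    fix es :: "'s list"
    show "\<bar>g_flow i (switch T a) (ss @ es) - g_flow i a (ss @ es)\<bar> \<le> 2 * g_max"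
      using abs_g_flow_le[OF a' _ i, of "ss @ es"] abs_g_flow_le[OF a _ i, of "ss @ es"] ss by simp
  qed
  then show ?thesis
    unfolding cont_eq_discounted_value
    by (simp add: discounted_value_diff summable_g_flow[OF a' ss i] summable_g_flow[OF a ss i])
qed

lemma fobj_switch_close:
  assumes a: "a \<in> Ainf A p \<zeta> x0"
  shows "\<bar>fobj \<zeta> P \<beta> r g I \<gamma> x0 s0 (switch T a) - fobj \<zeta> P \<beta> r g I \<gamma> x0 s0 a\<bar>
     \<le> 2 * f_max * \<beta> ^ T / (1 - \<beta>)"
proof -
  have a': "switch T a \<in> Ainf A p \<zeta> x0" by (rule switch_in_Ainf[OF a])
  have "\<bar>discounted_value P \<beta> [s0] (\<lambda>x. f_flow (switch T a) x - f_flow a x)\<bar> \<le> 2 * f_max * \<beta> ^ T / (1 - \<beta>)"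
  proof (rule discounted_value_tail_bound(2))
    fix es :: "'s list" assume "length es < T"
    then have "length ([s0] @ es) \<le> switch_date T ([s0] @ es)"
      unfolding switch_date_def by simp
    then show "f_flow (switch T a) ([s0] @ es) - f_flow a ([s0] @ es) = 0"
      unfolding f_flow_def using xst_switch_before[of "[s0] @ es" T a] switch_before by simp
  next
    fix es :: "'s list"
    show "\<bar>f_flow (switch T a) ([s0] @ es) - f_flow a ([s0] @ es)\<bar> \<le> 2 * f_max"
      using abs_f_flow_le[OF a', of "[s0] @ es"] abs_f_flow_le[OF a, of "[s0] @ es"] by simp
  qed
  then show ?thesis
    unfolding fobj_eq_discounted_value
    by (simp add: discounted_value_diff summable_f_flow[OF a'] summable_f_flow[OF a])
qed

section \<open>Multipliers and positive functionals\<close>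

definition stage_pairing ::
    "('s list \<times> 'a list \<Rightarrow> nat \<Rightarrow> real) \<Rightarrow> nat \<Rightarrow> (('s list \<times> 'a list) \<times> nat \<Rightarrow> real) \<Rightarrow> real" where
  "stage_pairing lam t y = (\<Sum>h\<in>hists t. \<Sum>i<I. \<beta> ^ t * lam h i * pit P s0 (fst h) * y (h, i))"

definition stage_mass :: "('s list \<times> 'a list \<Rightarrow> nat \<Rightarrow> real) \<Rightarrow> nat \<Rightarrow> real" where
  "stage_mass lam t = stage_pairing lam t (\<lambda>_. 1)"

definition multiplier_functional ::
    "('s list \<times> 'a list \<Rightarrow> nat \<Rightarrow> real) \<Rightarrow> (('s list \<times> 'a list) \<times> nat \<Rightarrow> real) \<Rightarrow> real" where
  "multiplier_functional lam y = (\<Sum>t. stage_pairing lam t y)"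

definition multiplier_flow :: "('s list \<times> 'a list \<Rightarrow> nat \<Rightarrow> real) \<Rightarrow> ('s list \<Rightarrow> 'a) \<Rightarrow> 's list \<Rightarrow> real" where
  "multiplier_flow lam a ss = (\<Sum>i<I. lam (gen a ss) i * (cont \<zeta> P \<beta> (g i) a x0 ss - gbar i))"

lemma summable_stage_mass: "lam \<in> LamSet A I P \<beta> s0 \<Longrightarrow> summable (stage_mass lam)"
  unfolding stage_mass_def stage_pairing_def LamSet_def by simp

lemma stage_weight_nonneg:
  "lam \<in> LamSet A I P \<beta> s0 \<Longrightarrow> h \<in> hists t \<Longrightarrow> i < I \<Longrightarrow> 0 \<le> \<beta> ^ t * lam h i * pit P s0 (fst h)"
  unfolding LamSet_def using \<beta>_pos pit_nonneg by auto

lemma stage_mass_nonneg: "lam \<in> LamSet A I P \<beta> s0 \<Longrightarrow> 0 \<le> stage_mass lam t"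
  unfolding stage_mass_def stage_pairing_def using stage_weight_nonneg by (auto intro!: sum_nonneg)

lemma abs_stage_pairing_le:
  assumes lam: "lam \<in> LamSet A I P \<beta> s0"
    and B: "\<And>h i. h \<in> hists t \<Longrightarrow> i < I \<Longrightarrow> hd (fst h) = s0 \<Longrightarrow> \<bar>y (h, i)\<bar> \<le> B"
  shows "\<bar>stage_pairing lam t y\<bar> \<le> B * stage_mass lam t"
proof -
  have weighted: "\<bar>\<beta> ^ t * lam h i * pit P s0 (fst h) * y (h, i)\<bar> \<le> B * (\<beta> ^ t * lam h i * pit P s0 (fst h))"
    if h: "h \<in> hists t" and i: "i < I" for h i
  proof (cases "hd (fst h) = s0")
    case True
    let ?w = "\<beta> ^ t * lam h i * pit P s0 (fst h)"
    have w: "0 \<le> ?w" by (rule stage_weight_nonneg[OF lam h i])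
    have "\<bar>?w * y (h, i)\<bar> = ?w * \<bar>y (h, i)\<bar>" by (simp only: abs_mult[of ?w] abs_of_nonneg[OF w])
    also have "\<dots> \<le> ?w * B" using B[OF h i True] w by (rule mult_left_mono)
    finally show ?thesis by (simp add: mult.commute)
  next
    case False
    then show ?thesis by (simp add: pit_def)
  qed
  have "\<bar>stage_pairing lam t y\<bar> \<le> (\<Sum>h\<in>hists t. \<Sum>i<I. \<bar>\<beta> ^ t * lam h i * pit P s0 (fst h) * y (h, i)\<bar>)"
    unfolding stage_pairing_def by (rule order_trans[OF sum_abs sum_mono[OF sum_abs]])
  also have "\<dots> \<le> (\<Sum>h\<in>hists t. \<Sum>i<I. B * (\<beta> ^ t * lam h i * pit P s0 (fst h)))"
    by (intro sum_mono weighted) auto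
  also have "\<dots> = B * stage_mass lam t"
    unfolding stage_mass_def stage_pairing_def by (simp add: sum_distrib_left)
  finally show ?thesis .
qed

lemma summable_stage_pairing:
  assumes lam: "lam \<in> LamSet A I P \<beta> s0" and y: "y \<in> linf coords"
  shows "summable (\<lambda>t. \<bar>stage_pairing lam t y\<bar>)" and "summable (\<lambda>t. stage_pairing lam t y)"
proof -
  obtain B where B: "\<forall>j\<in>coords. \<bar>y j\<bar> \<le> B" using y unfolding linf_def by blast
  have "\<bar>stage_pairing lam t y\<bar> \<le> B * stage_mass lam t" for t
    using B Hset_in_Jset by (intro abs_stage_pairing_le[OF lam]) blast
  then show "summable (\<lambda>t. \<bar>stage_pairing lam t y\<bar>)"
    by (intro summable_comparison_test[OF _ summable_mult[OF summable_stage_mass[OF lam]]]) auto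
  then show "summable (\<lambda>t. stage_pairing lam t y)" by (rule summable_rabs_cancel)
qed

lemma multiplier_functional_posdual:
  assumes lam: "lam \<in> LamSet A I P \<beta> s0"
  shows "multiplier_functional lam \<in> posdual coords"
  unfolding posdual_def
proof (intro CollectI conjI ballI allI impI)
  fix y z assume y: "y \<in> linf coords" and z: "z \<in> linf coords"
  have "stage_pairing lam t (\<lambda>j. y j + z j) = stage_pairing lam t y + stage_pairing lam t z" for t
    unfolding stage_pairing_def by (simp add: distrib_left sum.distrib)
  then show "multiplier_functional lam (\<lambda>j. y j + z j) = multiplier_functional lam y + multiplier_functional lam z"
    unfolding multiplier_functional_def
    by (simp add: suminf_add[OF summable_stage_pairing(2)[OF lam y] summable_stage_pairing(2)[OF lam z]])
next
  fix c y assume y: "y \<in> linf coords"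
  have "stage_pairing lam t (\<lambda>j. c * y j) = c * stage_pairing lam t y" for t
    unfolding stage_pairing_def by (simp add: sum_distrib_left mult_ac)
  then show "multiplier_functional lam (\<lambda>j. c * y j) = c * multiplier_functional lam y"
    unfolding multiplier_functional_def by (simp add: suminf_mult[OF summable_stage_pairing(2)[OF lam y]])
next
  show "\<exists>K. \<forall>y\<in>linf coords. \<forall>B. (\<forall>j\<in>coords. \<bar>y j\<bar> \<le> B) \<longrightarrow> \<bar>multiplier_functional lam y\<bar> \<le> K * B"
  proof (intro exI ballI allI impI)
    fix y B assume y: "y \<in> linf coords" and B: "\<forall>j\<in>coords. \<bar>y j\<bar> \<le> B"
    have "\<bar>multiplier_functional lam y\<bar> \<le> (\<Sum>t. \<bar>stage_pairing lam t y\<bar>)"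
      unfolding multiplier_functional_def using summable_rabs[OF summable_stage_pairing(1)[OF lam y]] .
    also have "\<dots> \<le> (\<Sum>t. B * stage_mass lam t)"
      using B Hset_in_Jset
      by (intro suminf_le summable_stage_pairing(1)[OF lam y] summable_mult[OF summable_stage_mass[OF lam]]
          abs_stage_pairing_le[OF lam]) blast
    also have "\<dots> = suminf (stage_mass lam) * B"
      using suminf_mult[OF summable_stage_mass[OF lam], of B] by simp
    finally show "\<bar>multiplier_functional lam y\<bar> \<le> suminf (stage_mass lam) * B" .
  qed
next
  fix y assume y: "y \<in> linf coords" and nonneg: "\<forall>j\<in>coords. 0 \<le> y j"
  have "0 \<le> \<beta> ^ t * lam h i * pit P s0 (fst h) * y (h, i)" if "h \<in> hists t" "i < I" for t h i
    using stage_weight_nonneg[OF lam that] nonneg Hset_in_Jset[OF that] by simp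
  then have "0 \<le> stage_pairing lam t y" for t
    unfolding stage_pairing_def by (intro sum_nonneg) auto
  then show "0 \<le> multiplier_functional lam y"
    unfolding multiplier_functional_def by (intro suminf_nonneg summable_stage_pairing(2)[OF lam y])
qed

lemma stage_pairing_gvec:
  assumes a: "a \<in> Ainf A p \<zeta> x0"
  shows "stage_pairing lam t (gvec A \<zeta> P \<beta> g gbar I x0 a) = \<beta> ^ t * condE P [s0] t (multiplier_flow lam a)"
proof -
  have "stage_pairing lam t (gvec A \<zeta> P \<beta> g gbar I x0 a)
     = (\<Sum>h\<in>hists t. if gen a (fst h) = h then
          (\<Sum>i<I. \<beta> ^ t * lam h i * pit P s0 (fst h) * (cont \<zeta> P \<beta> (g i) a x0 (fst h) - gbar i)) else 0)"
    unfolding stage_pairing_def by (intro sum.cong refl) (auto simp: gvec_on_Jset Hset_in_Jset)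
  also have "\<dots> = (\<Sum>ss | length ss = Suc t.
          \<Sum>i<I. \<beta> ^ t * lam (gen a ss) i * pit P s0 ss * (cont \<zeta> P \<beta> (g i) a x0 ss - gbar i))"
    by (simp add: sum_Hset_gen[OF A_fin a])
  also have "\<dots> = \<beta> ^ t * condE P [s0] t (multiplier_flow lam a)"
    unfolding condE_singleton_eq_pit multiplier_flow_def by (simp add: sum_distrib_left mult_ac)
  finally show ?thesis .
qed

lemma Lagr_eq_multiplier_functional:
  assumes a: "a \<in> Ainf A p \<zeta> x0" and lam: "lam \<in> LamSet A I P \<beta> s0"
  shows "Lagr \<zeta> P \<beta> r g gbar I \<gamma> x0 s0 a lam
       = fobj \<zeta> P \<beta> r g I \<gamma> x0 s0 a + multiplier_functional lam (gvec A \<zeta> P \<beta> g gbar I x0 a)"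
proof -
  have "summable (\<lambda>t. \<beta> ^ t * condE P [s0] t (multiplier_flow lam a))"
    using summable_stage_pairing(2)[OF lam gvec_in_linf[OF a]] unfolding stage_pairing_gvec[OF a] .
  then have "discounted_value P \<beta> [s0] (\<lambda>ss. f_flow a ss + multiplier_flow lam a ss)
      = fobj \<zeta> P \<beta> r g I \<gamma> x0 s0 a + discounted_value P \<beta> [s0] (multiplier_flow lam a)"
    unfolding fobj_eq_discounted_value by (rule discounted_value_add[OF summable_f_flow[OF a]])
  then show ?thesis
    unfolding multiplier_functional_def stage_pairing_gvec[OF a]
    by (simp add: Lagr_def f_flow_def multiplier_flow_def discounted_value_def add.assoc)
qed

text \<open>For histories not starting at \<open>s0\<close> the denominator vanishes and the multiplier is \<open>0\<close>
  (by \<open>x / 0 = 0\<close>); such histories carry no weight in \<open>Lagr\<close>.\<close>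

definition functional_multiplier ::
    "((('s list \<times> 'a list) \<times> nat \<Rightarrow> real) \<Rightarrow> real) \<Rightarrow> 's list \<times> 'a list \<Rightarrow> nat \<Rightarrow> real" where
  "functional_multiplier \<phi> h i = \<phi> (indicator {(h, i)}) / (\<beta> ^ (length (fst h) - 1) * pit P s0 (fst h))"

definition reachable :: "nat \<Rightarrow> (('s list \<times> 'a list) \<times> nat) set" where
  "reachable t = {h \<in> hists t. hd (fst h) = s0} \<times> {..<I}"

definition reachable_before :: "nat \<Rightarrow> (('s list \<times> 'a list) \<times> nat) set" where
  "reachable_before T = (\<Union>t<T. reachable t)"

lemma finite_reachable: "finite (reachable t)"
  unfolding reachable_def using finite_Hset[OF A_fin, of t] by (intro finite_cartesian_product) auto

lemma reachable_subset_coords: "reachable t \<subseteq> coords"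
  unfolding reachable_def Jset_def by auto

lemma reachable_before_subset_coords: "reachable_before T \<subseteq> coords"
  unfolding reachable_before_def using reachable_subset_coords by auto

lemma reachable_disjoint: "t \<noteq> t' \<Longrightarrow> reachable t \<inter> reachable t' = {}"
  unfolding reachable_def Hset_def by auto

lemma stage_weight_functional_multiplier:
  assumes h: "h \<in> hists t"
  shows "\<beta> ^ t * functional_multiplier \<phi> h i * pit P s0 (fst h)
       = (if hd (fst h) = s0 then \<phi> (indicator {(h, i)}) else 0)"
proof (cases "hd (fst h) = s0")
  case True
  have len: "length (fst h) = Suc t" using h unfolding Hset_def by auto
  then have "0 < pit P s0 (fst h)" using pit_pos[OF _ True] by (auto simp: length_Suc_conv)
  then show ?thesis using True len \<beta>_pos unfolding functional_multiplier_def by simp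
next
  case False
  then show ?thesis by (simp add: pit_def)
qed

lemma stage_pairing_functional_multiplier:
  "stage_pairing (functional_multiplier \<phi>) t y = (\<Sum>j\<in>reachable t. y j * \<phi> (indicator {j}))"
proof -
  have "\<beta> ^ t * functional_multiplier \<phi> h i * pit P s0 (fst h) * y (h, i)
      = (if hd (fst h) = s0 then y (h, i) * \<phi> (indicator {(h, i)}) else 0)" if "h \<in> hists t" for h i
    using stage_weight_functional_multiplier[OF that, of \<phi> i] by simp
  then have "stage_pairing (functional_multiplier \<phi>) t y
      = (\<Sum>h\<in>hists t. if hd (fst h) = s0 then (\<Sum>i<I. y (h, i) * \<phi> (indicator {(h, i)})) else 0)"
    unfolding stage_pairing_def by (intro sum.cong refl) auto
  also have "\<dots> = (\<Sum>h\<in>{h \<in> hists t. hd (fst h) = s0}. \<Sum>i<I. y (h, i) * \<phi> (indicator {(h, i)}))"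
    by (rule sum.inter_filter[symmetric, OF finite_Hset[OF A_fin]])
  also have "\<dots> = (\<Sum>j\<in>reachable t. y j * \<phi> (indicator {j}))"
    unfolding reachable_def sum.cartesian_product by simp
  finally show ?thesis .
qed

lemma posdual_restrict_reachable_before:
  assumes \<phi>: "\<phi> \<in> posdual coords"
  shows "\<phi> (\<lambda>j. if j \<in> reachable_before T then y j else 0) = (\<Sum>t<T. stage_pairing (functional_multiplier \<phi>) t y)"
proof -
  have "finite (reachable_before T)"
    unfolding reachable_before_def using finite_reachable by auto
  then have "\<phi> (\<lambda>j. if j \<in> reachable_before T then y j else 0) = (\<Sum>j\<in>reachable_before T. y j * \<phi> (indicator {j}))"
    by (rule posdual_finite_restrict[OF \<phi> _ reachable_before_subset_coords])
  also have "\<dots> = (\<Sum>t<T. \<Sum>j\<in>reachable t. y j * \<phi> (indicator {j}))"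
    unfolding reachable_before_def
    by (rule sum.UNION_disjoint) (auto simp: finite_reachable reachable_disjoint)
  finally show ?thesis unfolding stage_pairing_functional_multiplier .
qed

lemma functional_multiplier_in_LamSet:
  assumes \<phi>: "\<phi> \<in> posdual coords"
  shows "functional_multiplier \<phi> \<in> LamSet A I P \<beta> s0"
  unfolding LamSet_def
proof (intro CollectI conjI allI ballI impI)
  fix t h i assume h: "h \<in> hists t" and i: "i < I"
  have "0 \<le> \<phi> (indicator {(h, i)})"
    using Hset_in_Jset[OF h i] by (intro posdual_nonneg[OF \<phi> linf_indicator]) auto
  then show "0 \<le> functional_multiplier \<phi> h i"
    unfolding functional_multiplier_def using \<beta>_pos pit_nonneg by simp
next
  have nonneg: "0 \<le> stage_mass (functional_multiplier \<phi>) t" for t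
    unfolding stage_mass_def stage_pairing_functional_multiplier
    using reachable_subset_coords
    by (intro sum_nonneg) (auto intro!: posdual_nonneg[OF \<phi> linf_indicator])
  have "(\<Sum>t<T. stage_mass (functional_multiplier \<phi>) t) \<le> \<phi> (indicator coords)" for T
  proof -
    have ind: "(\<lambda>j. if j \<in> reachable_before T then 1 else 0) = (indicator (reachable_before T) :: _ \<Rightarrow> real)"
      by (simp add: fun_eq_iff indicator_def)
    have "(\<Sum>t<T. stage_mass (functional_multiplier \<phi>) t) = \<phi> (indicator (reachable_before T))"
      using posdual_restrict_reachable_before[OF \<phi>, of T "\<lambda>_. 1"] unfolding stage_mass_def ind by simp
    also have "\<dots> \<le> \<phi> (indicator coords)"
      using reachable_before_subset_coords
      by (intro posdual_mono[OF \<phi> linf_indicator linf_indicator]) (auto simp: indicator_def)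
    finally show ?thesis .
  qed
  then have "summable (stage_mass (functional_multiplier \<phi>))"
    by (rule summableI_nonneg_bounded[OF nonneg])
  then show "summable (\<lambda>t. \<Sum>h\<in>hists t. \<Sum>i<I. \<beta> ^ t * functional_multiplier \<phi> h i * pit P s0 (fst h))"
    unfolding stage_mass_def stage_pairing_def by simp
qed

section \<open>Closing the duality gap\<close>

lemma gvec_switch_nonneg:
  assumes a: "a \<in> Ainf A p \<zeta> x0" and j: "j \<in> coords" and late: "j \<notin> reachable_before T"
  shows "0 \<le> gvec A \<zeta> P \<beta> g gbar I x0 (switch T a) j"
proof -
  obtain h i where hi: "j = (h, i)" by (cases j)
  from j hi obtain t where h: "h \<in> hists t" and i: "i < I" unfolding Jset_def by auto
  have len: "length (fst h) = Suc t" using h unfolding Hset_def by auto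
  have "switch_date T (fst h) < length (fst h)"
  proof (cases "hd (fst h) = s0")
    case True
    then have "(h, i) \<in> reachable t" unfolding reachable_def using h i by auto
    then have "\<not> t < T" using late hi unfolding reachable_before_def by auto
    then show ?thesis using True len unfolding switch_date_def by simp
  next
    case False
    then show ?thesis using len unfolding switch_date_def by simp
  qed
  then have "gbar i \<le> cont \<zeta> P \<beta> (g i) (switch T a) x0 (fst h)"
    using len by (intro cont_switch_ge[OF a _ _ i]) auto
  then show ?thesis unfolding hi gvec_on_Jset[OF j[unfolded hi]] by simp
qed

lemma stage_pairing_switch_close:
  assumes lam: "lam \<in> LamSet A I P \<beta> s0" and a: "a \<in> Ainf A p \<zeta> x0" and t: "t < T"
  shows "stage_pairing lam t (gvec A \<zeta> P \<beta> g gbar I x0 a)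
    \<le> stage_pairing lam t (gvec A \<zeta> P \<beta> g gbar I x0 (switch T a))
       + 2 * g_max / (1 - \<beta>) * (stage_mass lam t * \<beta> ^ (T - t))"
proof -
  let ?gv = "gvec A \<zeta> P \<beta> g gbar I x0"
  let ?B = "2 * g_max * \<beta> ^ (T - t) / (1 - \<beta>)"
  have "\<bar>stage_pairing lam t (\<lambda>j. ?gv a j - ?gv (switch T a) j)\<bar> \<le> ?B * stage_mass lam t"
  proof (rule abs_stage_pairing_le[OF lam])
    fix h i assume h: "h \<in> hists t" and i: "i < I" and start: "hd (fst h) = s0"
    have len: "length (fst h) = Suc t" using h unfolding Hset_def by auto
    then have ne: "fst h \<noteq> []" by auto
    have date: "switch_date T (fst h) = T" using start unfolding switch_date_def by simp
    have "gen (switch T a) (fst h) = gen a (fst h)"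
      by (rule gen_switch_before[OF ne]) (use date len t in simp)
    then have "?gv a (h, i) - ?gv (switch T a) (h, i) = (if gen a (fst h) = h then 1 else 0)
        * (cont \<zeta> P \<beta> (g i) a x0 (fst h) - cont \<zeta> P \<beta> (g i) (switch T a) x0 (fst h))"
      unfolding gvec_on_Jset[OF Hset_in_Jset[OF h i]] by (simp add: algebra_simps)
    moreover have "\<bar>cont \<zeta> P \<beta> (g i) (switch T a) x0 (fst h) - cont \<zeta> P \<beta> (g i) a x0 (fst h)\<bar> \<le> ?B"
      using cont_switch_close[OF a ne i, of T] date len by simp
    moreover have "0 \<le> ?B" using g_max_nonneg \<beta>_pos \<beta>_less_1 by simp
    ultimately show "\<bar>?gv a (h, i) - ?gv (switch T a) (h, i)\<bar> \<le> ?B"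
      by (auto simp: abs_minus_commute)
  qed
  moreover have "stage_pairing lam t (\<lambda>j. ?gv a j - ?gv (switch T a) j)
      = stage_pairing lam t (?gv a) - stage_pairing lam t (?gv (switch T a))"
    unfolding stage_pairing_def by (simp add: sum_subtractf right_diff_distrib)
  moreover have "?B * stage_mass lam t = 2 * g_max / (1 - \<beta>) * (stage_mass lam t * \<beta> ^ (T - t))"
    by (simp add: field_simps)
  ultimately show ?thesis by linarith
qed

lemma stage_pairing_tail_le:
  assumes lam: "lam \<in> LamSet A I P \<beta> s0" and a: "a \<in> Ainf A p \<zeta> x0"
  shows "(\<Sum>n. stage_pairing lam (n + T) (gvec A \<zeta> P \<beta> g gbar I x0 a))
       \<le> gvec_max * (\<Sum>n. stage_mass lam (n + T))"
proof -
  let ?y = "gvec A \<zeta> P \<beta> g gbar I x0 a"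
  have "\<bar>stage_pairing lam (n + T) ?y\<bar> \<le> gvec_max * stage_mass lam (n + T)" for n
    by (rule abs_stage_pairing_le[OF lam]) (rule abs_gvec_le[OF a Hset_in_Jset])
  then have "(\<Sum>n. stage_pairing lam (n + T) ?y) \<le> (\<Sum>n. gvec_max * stage_mass lam (n + T))"
    by (intro suminf_le summable_ignore_initial_segment summable_mult
        summable_stage_pairing(2)[OF lam gvec_in_linf[OF a]] summable_stage_mass[OF lam]) (simp add: abs_le_iff)
  also have "\<dots> = gvec_max * (\<Sum>n. stage_mass lam (n + T))"
    by (intro suminf_mult summable_ignore_initial_segment summable_stage_mass[OF lam])
  finally show ?thesis .
qed

lemma partial_stage_pairing_le_functional:
  assumes \<phi>: "\<phi> \<in> posdual coords" and a: "a \<in> Ainf A p \<zeta> x0"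
  shows "(\<Sum>t<T. stage_pairing (functional_multiplier \<phi>) t (gvec A \<zeta> P \<beta> g gbar I x0 (switch T a)))
       \<le> \<phi> (gvec A \<zeta> P \<beta> g gbar I x0 (switch T a))"
proof -
  let ?y = "gvec A \<zeta> P \<beta> g gbar I x0 (switch T a)"
  have y: "?y \<in> linf coords" by (rule gvec_in_linf[OF switch_in_Ainf[OF a]])
  have "(\<Sum>t<T. stage_pairing (functional_multiplier \<phi>) t ?y) = \<phi> (\<lambda>j. if j \<in> reachable_before T then ?y j else 0)"
    by (rule posdual_restrict_reachable_before[OF \<phi>, symmetric])
  also have "\<dots> \<le> \<phi> ?y"
    using gvec_switch_nonneg[OF a] by (intro posdual_mono[OF \<phi> linf_restrict[OF y] y]) auto
  finally show ?thesis .
qed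

definition switch_error :: "((('s list \<times> 'a list) \<times> nat \<Rightarrow> real) \<Rightarrow> real) \<Rightarrow> nat \<Rightarrow> real" where
  "switch_error \<phi> T = 2 * f_max * \<beta> ^ T / (1 - \<beta>)
     + 2 * g_max / (1 - \<beta>) * (\<Sum>t<T. stage_mass (functional_multiplier \<phi>) t * \<beta> ^ (T - t))
     + gvec_max * (\<Sum>n. stage_mass (functional_multiplier \<phi>) (n + T))"

lemma Lagr_le_switch:
  assumes \<phi>: "\<phi> \<in> posdual coords" and a: "a \<in> Ainf A p \<zeta> x0"
  shows "Lagr \<zeta> P \<beta> r g gbar I \<gamma> x0 s0 a (functional_multiplier \<phi>)
    \<le> fobj \<zeta> P \<beta> r g I \<gamma> x0 s0 (switch T a) + \<phi> (gvec A \<zeta> P \<beta> g gbar I x0 (switch T a)) + switch_error \<phi> T"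
proof -
  define lam where "lam = functional_multiplier \<phi>"
  let ?gv = "gvec A \<zeta> P \<beta> g gbar I x0"
  have lam: "lam \<in> LamSet A I P \<beta> s0" unfolding lam_def by (rule functional_multiplier_in_LamSet[OF \<phi>])
  have "Lagr \<zeta> P \<beta> r g gbar I \<gamma> x0 s0 a lam = fobj \<zeta> P \<beta> r g I \<gamma> x0 s0 a
      + (\<Sum>n. stage_pairing lam (n + T) (?gv a)) + (\<Sum>t<T. stage_pairing lam t (?gv a))"
    using Lagr_eq_multiplier_functional[OF a lam]
      suminf_split_initial_segment[OF summable_stage_pairing(2)[OF lam gvec_in_linf[OF a]], of T]
    unfolding multiplier_functional_def by simp
  moreover have "fobj \<zeta> P \<beta> r g I \<gamma> x0 s0 a \<le> fobj \<zeta> P \<beta> r g I \<gamma> x0 s0 (switch T a) + 2 * f_max * \<beta> ^ T / (1 - \<beta>)"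
    using fobj_switch_close[OF a, of T] by linarith
  moreover have "(\<Sum>t<T. stage_pairing lam t (?gv a)) \<le> (\<Sum>t<T. stage_pairing lam t (?gv (switch T a)))
      + 2 * g_max / (1 - \<beta>) * (\<Sum>t<T. stage_mass lam t * \<beta> ^ (T - t))"
    using sum_mono[of "{..<T}", OF stage_pairing_switch_close[OF lam a]]
    by (simp add: sum.distrib sum_distrib_left)
  moreover note stage_pairing_tail_le[OF lam a, of T]
    partial_stage_pairing_le_functional[OF \<phi> a, of T]
  ultimately show ?thesis unfolding switch_error_def lam_def by linarith
qed

lemma switch_error_tendsto_0:
  assumes \<phi>: "\<phi> \<in> posdual coords"
  shows "switch_error \<phi> \<longlonglongrightarrow> 0"
proof -
  let ?m = "stage_mass (functional_multiplier \<phi>)"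
  have lam: "functional_multiplier \<phi> \<in> LamSet A I P \<beta> s0" by (rule functional_multiplier_in_LamSet[OF \<phi>])
  have "(\<lambda>T. 2 * f_max * \<beta> ^ T / (1 - \<beta>)) \<longlonglongrightarrow> 0"
    using \<beta>_pos \<beta>_less_1 by (intro tendsto_divide_zero tendsto_mult_right_zero LIMSEQ_power_zero) auto
  moreover have "(\<lambda>T. 2 * g_max / (1 - \<beta>) * (\<Sum>t<T. ?m t * \<beta> ^ (T - t))) \<longlonglongrightarrow> 0"
    by (intro tendsto_mult_right_zero convolution_geometric_tendsto_0 stage_mass_nonneg[OF lam]
        summable_stage_mass[OF lam] \<beta>_pos \<beta>_less_1)
  moreover have "(\<lambda>T. gvec_max * (\<Sum>n. ?m (n + T))) \<longlonglongrightarrow> 0"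
    by (intro tendsto_mult_right_zero suminf_exist_split2 summable_stage_mass[OF lam])
  ultimately have "(\<lambda>T. 2 * f_max * \<beta> ^ T / (1 - \<beta>) + 2 * g_max / (1 - \<beta>) * (\<Sum>t<T. ?m t * \<beta> ^ (T - t))
      + gvec_max * (\<Sum>n. ?m (n + T))) \<longlonglongrightarrow> 0 + 0 + 0"
    by (intro tendsto_add)
  then show ?thesis unfolding switch_error_def[abs_def] by simp
qed

lemma Lagr_le_SUP_posdual:
  assumes \<phi>: "\<phi> \<in> posdual coords" and a: "a \<in> Ainf A p \<zeta> x0"
  shows "ereal (Lagr \<zeta> P \<beta> r g gbar I \<gamma> x0 s0 a (functional_multiplier \<phi>))
     \<le> (SUP b\<in>Ainf A p \<zeta> x0. ereal (fobj \<zeta> P \<beta> r g I \<gamma> x0 s0 b + \<phi> (gvec A \<zeta> P \<beta> g gbar I x0 b)))"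
proof (rule ereal_le_epsilon2)
  fix e :: real assume "0 < e"
  with switch_error_tendsto_0[OF \<phi>] have "eventually (\<lambda>T. switch_error \<phi> T < e) sequentially"
    by (rule order_tendstoD)
  then obtain T where T: "switch_error \<phi> T < e" by (auto simp: eventually_sequentially)
  have "ereal (Lagr \<zeta> P \<beta> r g gbar I \<gamma> x0 s0 a (functional_multiplier \<phi>))
     \<le> ereal (fobj \<zeta> P \<beta> r g I \<gamma> x0 s0 (switch T a) + \<phi> (gvec A \<zeta> P \<beta> g gbar I x0 (switch T a))) + ereal e"
    using Lagr_le_switch[OF \<phi> a, of T] T by simp
  also have "\<dots> \<le> (SUP b\<in>Ainf A p \<zeta> x0. ereal (fobj \<zeta> P \<beta> r g I \<gamma> x0 s0 b + \<phi> (gvec A \<zeta> P \<beta> g gbar I x0 b))) + ereal e"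
    by (intro add_right_mono SUP_upper switch_in_Ainf[OF a])
  finally show "ereal (Lagr \<zeta> P \<beta> r g gbar I \<gamma> x0 s0 a (functional_multiplier \<phi>))
     \<le> (SUP b\<in>Ainf A p \<zeta> x0. ereal (fobj \<zeta> P \<beta> r g I \<gamma> x0 s0 b + \<phi> (gvec A \<zeta> P \<beta> g gbar I x0 b))) + ereal e" .
qed

lemma INF_posdual_le_Dval:
  "(INF \<phi>\<in>posdual coords. SUP a\<in>Ainf A p \<zeta> x0.
      ereal (fobj \<zeta> P \<beta> r g I \<gamma> x0 s0 a + \<phi> (gvec A \<zeta> P \<beta> g gbar I x0 a)))
   \<le> Dval A p \<zeta> P \<beta> r g gbar I \<gamma> x0 s0"
  unfolding Dval_def
proof (rule INF_greatest)
  fix lam assume lam: "lam \<in> LamSet A I P \<beta> s0"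
  have "(INF \<phi>\<in>posdual coords. SUP a\<in>Ainf A p \<zeta> x0.
      ereal (fobj \<zeta> P \<beta> r g I \<gamma> x0 s0 a + \<phi> (gvec A \<zeta> P \<beta> g gbar I x0 a)))
    \<le> (SUP a\<in>Ainf A p \<zeta> x0. ereal (fobj \<zeta> P \<beta> r g I \<gamma> x0 s0 a
           + multiplier_functional lam (gvec A \<zeta> P \<beta> g gbar I x0 a)))"
    by (rule INF_lower[OF multiplier_functional_posdual[OF lam]])
  also have "\<dots> = (SUP a\<in>Ainf A p \<zeta> x0. ereal (Lagr \<zeta> P \<beta> r g gbar I \<gamma> x0 s0 a lam))"
    by (intro SUP_cong refl) (simp add: Lagr_eq_multiplier_functional[OF _ lam])
  finally show "(INF \<phi>\<in>posdual coords. SUP a\<in>Ainf A p \<zeta> x0.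
      ereal (fobj \<zeta> P \<beta> r g I \<gamma> x0 s0 a + \<phi> (gvec A \<zeta> P \<beta> g gbar I x0 a)))
    \<le> (SUP a\<in>Ainf A p \<zeta> x0. ereal (Lagr \<zeta> P \<beta> r g gbar I \<gamma> x0 s0 a lam))" .
qed

lemma Dval_le_INF_posdual:
  "Dval A p \<zeta> P \<beta> r g gbar I \<gamma> x0 s0
   \<le> (INF \<phi>\<in>posdual coords. SUP a\<in>Ainf A p \<zeta> x0.
      ereal (fobj \<zeta> P \<beta> r g I \<gamma> x0 s0 a + \<phi> (gvec A \<zeta> P \<beta> g gbar I x0 a)))"
proof (rule INF_greatest)
  fix \<phi> assume \<phi>: "\<phi> \<in> posdual coords"
  have "Dval A p \<zeta> P \<beta> r g gbar I \<gamma> x0 s0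
      \<le> (SUP a\<in>Ainf A p \<zeta> x0. ereal (Lagr \<zeta> P \<beta> r g gbar I \<gamma> x0 s0 a (functional_multiplier \<phi>)))"
    unfolding Dval_def by (rule INF_lower[OF functional_multiplier_in_LamSet[OF \<phi>]])
  also have "\<dots> \<le> (SUP a\<in>Ainf A p \<zeta> x0. ereal (fobj \<zeta> P \<beta> r g I \<gamma> x0 s0 a + \<phi> (gvec A \<zeta> P \<beta> g gbar I x0 a)))"
    by (rule SUP_least) (rule Lagr_le_SUP_posdual[OF \<phi>])
  finally show "Dval A p \<zeta> P \<beta> r g gbar I \<gamma> x0 s0
      \<le> (SUP a\<in>Ainf A p \<zeta> x0. ereal (fobj \<zeta> P \<beta> r g I \<gamma> x0 s0 a + \<phi> (gvec A \<zeta> P \<beta> g gbar I x0 a)))" .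
qed

end

lemma uniform_bound_finite_family:
  fixes f :: "nat \<Rightarrow> 'x \<Rightarrow> 'a \<Rightarrow> 's \<Rightarrow> real"
  assumes "\<forall>i<I. \<exists>B. \<forall>x\<in>X. \<forall>a\<in>A. \<forall>s. \<bar>f i x a s\<bar> \<le> B"
  shows "\<exists>B\<ge>0. \<forall>i<I. \<forall>x\<in>X. \<forall>a\<in>A. \<forall>s. \<bar>f i x a s\<bar> \<le> B"
proof -
  from assms obtain b where b: "\<And>i x a s. i < I \<Longrightarrow> x \<in> X \<Longrightarrow> a \<in> A \<Longrightarrow> \<bar>f i x a s\<bar> \<le> b i"
    by metis
  have "\<bar>f i x a s\<bar> \<le> (\<Sum>k<I. \<bar>b k\<bar>)" if "i < I" "x \<in> X" "a \<in> A" for i x a s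
    using b[OF that, of s] member_le_sum[of i "{..<I}" "\<lambda>k. \<bar>b k\<bar>"] that by force
  then show ?thesis by (intro exI[of _ "\<Sum>k<I. \<bar>b k\<bar>"]) (auto simp: sum_nonneg)
qed

theorem theoremC1:
  fixes P :: "'s::finite \<Rightarrow> 's \<Rightarrow> real"
    and A :: "(real^'n) set"
    and X :: "(real^'m) set"
    and \<zeta> :: "real^'m \<Rightarrow> real^'n \<Rightarrow> 's \<Rightarrow> real^'m"
    and p r :: "real^'m \<Rightarrow> real^'n \<Rightarrow> 's \<Rightarrow> real"
    and g :: "nat \<Rightarrow> real^'m \<Rightarrow> real^'n \<Rightarrow> 's \<Rightarrow> real"
    and gbar \<gamma> :: "nat \<Rightarrow> real"
    and I :: nat
    and \<beta> :: real
    and x0 :: "real^'m" and s0 :: 's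
  assumes P_pos: "\<forall>s s'. P s s' > 0"
    and P_sum: "\<forall>s. (\<Sum>s'\<in>UNIV. P s s') = 1"
    and A_fin: "finite A"
    and X_count: "countable X"
    and \<zeta>_X: "\<forall>x\<in>X. \<forall>a\<in>A. \<forall>s. \<zeta> x a s \<in> X"
    and r_bdd: "\<exists>B. \<forall>x\<in>X. \<forall>a\<in>A. \<forall>s. \<bar>r x a s\<bar> \<le> B"
    and g_bdd: "\<forall>i<I. \<exists>B. \<forall>x\<in>X. \<forall>a\<in>A. \<forall>s. \<bar>g i x a s\<bar> \<le> B"
    and \<beta>: "0 < \<beta>" "\<beta> < 1"
    and standing: "\<forall>x0'\<in>X. \<forall>s0'. \<exists>a. feasible A p \<zeta> P \<beta> g gbar I x0' s0' a"
    and \<gamma>_nonneg: "\<forall>i<I. \<gamma> i \<ge> 0"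
    and x0: "x0 \<in> X"
  shows "(INF \<phi>\<in>posdual (Jset A I). SUP a\<in>Ainf A p \<zeta> x0.
            ereal (fobj \<zeta> P \<beta> r g I \<gamma> x0 s0 a + \<phi> (gvec A \<zeta> P \<beta> g gbar I x0 a)))
         = Dval A p \<zeta> P \<beta> r g gbar I \<gamma> x0 s0"
proof -
  obtain r_max where r_max: "\<forall>x\<in>X. \<forall>a\<in>A. \<forall>s. \<bar>r x a s\<bar> \<le> r_max"
    using r_bdd by blast
  obtain g_max where g_max: "0 \<le> g_max" "\<forall>i<I. \<forall>x\<in>X. \<forall>a\<in>A. \<forall>s. \<bar>g i x a s\<bar> \<le> g_max"
    using uniform_bound_finite_family[OF g_bdd] by blast
  define continuation where "continuation x s = (SOME a. feasible A p \<zeta> P \<beta> g gbar I x s a)" for x s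
  have "\<forall>x\<in>X. \<forall>s. feasible A p \<zeta> P \<beta> g gbar I x s (continuation x s)"
    using standing unfolding continuation_def by (metis someI_ex)
  then interpret discounted_problem P \<beta> A X \<zeta> p r g gbar \<gamma> I x0 s0 r_max g_max continuation
    using P_pos P_sum A_fin \<zeta>_X \<beta> x0 r_max g_max by unfold_locales auto
  show ?thesis
    by (rule antisym[OF INF_posdual_le_Dval Dval_le_INF_posdual])
qed

end
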